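(* Assume (C1) and (C2). For all $u\in\mathcal{D}$ and $t\ge0$, $$I(u)\ge I(tu)+\frac{1-t^q}{q}\langle I'(u),u\rangle+\Big(\frac{1-t^p}{p}-\frac{1-t^q}{q}\Big)\|u\|^p.$$
   Context: Fix real numbers $p,q,r$ with $1<p<q$, $\frac p2$ a positive integer, and $r\ge1$, and functions $a,b,c:\mathbb{Z}\to(0,+\infty)$. Conditions: - (C1) There is $b_0>0$ with $b(n)\ge b_0$ for all $n$ and $b(n)\to+\infty$ as $|n|\to\infty$. - (C2) There is $c_0>0$ with $c(n)\le c_0$ for all $n$ and $\sum_n c(n)<+\infty$. Notation and spaces: - $\Delta u(n)=u(n+1)-u(n)$. - $E$ is the set of real sequences $u$ with $\|u\|:=\big(\sum_n[a(n)|\Delta u(n)|^p+b(n)|u(n)|^p]\big)^{1/p}<\infty$. - $\mathcal{D}=\{u\in E:\sum_n c(n)|u(n)|^q\ln|u(n)|^r<+\infty\}$, where terms with $u(n)=0$ are read as $0$. For $u,v\in\mathcal{D}$: - $I(u)=\frac1p\|u\|^p+\frac{r}{q^2}\sum_n c(n)|u(n)|^q-\frac1q\sum_n c(n)|u(n)|^q\ln|u(n)|^r$. - $\langle I'(u),v\rangle=\sum_n[a(n)|\Delta u(n)|^{p-2}\Delta u(n)\Delta v(n)+b(n)|u(n)|^{p-2}u(n)v(n)]-\sum_n c(n)|u(n)|^{q-2}u(n)v(n)\ln|u(n)|^r$. *)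

theory Defs
  imports "HOL-Analysis.Analysis"
begin

definition fdiff :: "(int \<Rightarrow> real) \<Rightarrow> int \<Rightarrow> real" where
  "fdiff u n = u (n + 1) - u n"

definition Eterm :: "(int \<Rightarrow> real) \<Rightarrow> (int \<Rightarrow> real) \<Rightarrow> real \<Rightarrow> (int \<Rightarrow> real) \<Rightarrow> int \<Rightarrow> real" where
  "Eterm a b p u n = a n * \<bar>fdiff u n\<bar> powr p + b n * \<bar>u n\<bar> powr p"

definition inE :: "(int \<Rightarrow> real) \<Rightarrow> (int \<Rightarrow> real) \<Rightarrow> real \<Rightarrow> (int \<Rightarrow> real) \<Rightarrow> bool" where
  "inE a b p u \<longleftrightarrow> Eterm a b p u summable_on UNIV"

definition normE :: "(int \<Rightarrow> real) \<Rightarrow> (int \<Rightarrow> real) \<Rightarrow> real \<Rightarrow> (int \<Rightarrow> real) \<Rightarrow> real" where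
  "normE a b p u = (\<Sum>\<^sub>\<infinity>n. Eterm a b p u n) powr (1 / p)"

text \<open>c(n) |u(n)|^q ln |u(n)|^r; for u(n)=0 this is 0 since 0 powr q = 0.\<close>
definition logterm :: "(int \<Rightarrow> real) \<Rightarrow> real \<Rightarrow> real \<Rightarrow> (int \<Rightarrow> real) \<Rightarrow> int \<Rightarrow> real" where
  "logterm c q r u n = c n * \<bar>u n\<bar> powr q * ln (\<bar>u n\<bar> powr r)"

definition inD :: "(int \<Rightarrow> real) \<Rightarrow> (int \<Rightarrow> real) \<Rightarrow> (int \<Rightarrow> real) \<Rightarrow> real \<Rightarrow> real \<Rightarrow> real \<Rightarrow> (int \<Rightarrow> real) \<Rightarrow> bool" where
  "inD a b c p q r u \<longleftrightarrow> inE a b p u \<and> logterm c q r u summable_on UNIV"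

definition Ifun :: "(int \<Rightarrow> real) \<Rightarrow> (int \<Rightarrow> real) \<Rightarrow> (int \<Rightarrow> real) \<Rightarrow> real \<Rightarrow> real \<Rightarrow> real \<Rightarrow> (int \<Rightarrow> real) \<Rightarrow> real" where
  "Ifun a b c p q r u =
     (1 / p) * normE a b p u powr p
     + (r / q\<^sup>2) * (\<Sum>\<^sub>\<infinity>n. c n * \<bar>u n\<bar> powr q)
     - (1 / q) * (\<Sum>\<^sub>\<infinity>n. logterm c q r u n)"

definition dI :: "(int \<Rightarrow> real) \<Rightarrow> (int \<Rightarrow> real) \<Rightarrow> (int \<Rightarrow> real) \<Rightarrow> real \<Rightarrow> real \<Rightarrow> real \<Rightarrow> (int \<Rightarrow> real) \<Rightarrow> (int \<Rightarrow> real) \<Rightarrow> real" where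
  "dI a b c p q r u v =
     (\<Sum>\<^sub>\<infinity>n. a n * \<bar>fdiff u n\<bar> powr (p - 2) * fdiff u n * fdiff v n
              + b n * \<bar>u n\<bar> powr (p - 2) * u n * v n)
     - (\<Sum>\<^sub>\<infinity>n. c n * \<bar>u n\<bar> powr (q - 2) * u n * v n * ln (\<bar>u n\<bar> powr r))"

end

theory Submission
  imports Defs
begin

text \<open>
  Along the ray \<open>t \<mapsto> t u\<close> every ingredient of \<open>I\<close> scales explicitly:
  \<open>\<parallel>t u\<parallel>\<^sup>p = t\<^sup>p \<parallel>u\<parallel>\<^sup>p\<close>, \<open>\<Sum> c |t u|\<^sup>q = t\<^sup>q \<Sum> c |u|\<^sup>q\<close>, and the logarithmic term picks up the
  extra summand \<open>r t\<^sup>q ln t \<Sum> c |u|\<^sup>q\<close>. Moreover \<open>\<langle>I'(u), u\<rangle> = \<parallel>u\<parallel>\<^sup>p - \<Sum> c |u|\<^sup>q ln |u|\<^sup>r\<close>.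
  Substituting, the difference of the two sides of the inequality collapses to
  \<open>(r/q\<^sup>2) (\<Sum> c |u|\<^sup>q) (1 - t\<^sup>q + q t\<^sup>q ln t)\<close>, which is nonnegative because
  \<open>1 - s + s ln s \<ge> 0\<close> for \<open>s \<ge> 0\<close>. The only analytic input is that \<open>\<Sum> c |u|\<^sup>q\<close> converges:
  \<open>b \<ge> b\<^sub>0\<close> bounds \<open>|u(n)|\<^sup>p\<close> uniformly by \<open>\<parallel>u\<parallel>\<^sup>p / b\<^sub>0\<close>, so \<open>c |u|\<^sup>q\<close> is dominated by a
  multiple of the summable sequence \<open>b |u|\<^sup>p\<close>.
\<close>

lemma one_minus_plus_mult_ln_nonneg:
  fixes x :: real
  assumes "x \<ge> 0"
  shows "0 \<le> 1 - x + x * ln x"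
proof (cases "x = 0")
  case False
  then have "x > 0" using assms by simp
  have "ln (1 / x) \<le> 1 / x - 1"
    using \<open>x > 0\<close> by (intro ln_le_minus_one) simp
  then have "x * (- ln x) \<le> x * (1 / x - 1)"
    using \<open>x > 0\<close> by (intro mult_left_mono) (auto simp: ln_div)
  then show ?thesis
    using \<open>x > 0\<close> by (simp add: algebra_simps)
qed simp

lemma one_minus_powr_plus_ln_nonneg:
  fixes t q :: real
  assumes "t \<ge> 0" "q > 0"
  shows "0 \<le> 1 - t powr q + q * (t powr q * ln t)"
proof (cases "t = 0")
  case False
  then have "q * (t powr q * ln t) = t powr q * ln (t powr q)"
    using assms by (simp add: ln_powr)
  then show ?thesis
    using one_minus_plus_mult_ln_nonneg[of "t powr q"] by (simp add: algebra_simps)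
qed simp

lemma le_infsum_of_nonneg:
  fixes g :: "'a \<Rightarrow> real"
  assumes "g summable_on UNIV" "\<And>x. g x \<ge> 0"
  shows "g x \<le> infsum g UNIV"
proof -
  have "infsum g {x} \<le> infsum g UNIV"
    by (rule infsum_mono_neutral) (use assms in auto)
  then show ?thesis by simp
qed

lemma abs_powr_minus_two_mult_self:
  fixes x p :: real
  shows "\<bar>x\<bar> powr (p - 2) * x * x = \<bar>x\<bar> powr p"
proof (cases "x = 0")
  case False
  then have "\<bar>x\<bar> powr (p - 2) * x * x = \<bar>x\<bar> powr (p - 2) * \<bar>x\<bar> powr 2"
    by (simp add: powr_realpow' abs_mult_self_eq flip: power2_eq_square)
  also have "\<dots> = \<bar>x\<bar> powr p"
    by (subst powr_add[symmetric]) simp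
  finally show ?thesis .
qed simp

lemma Eterm_nonneg:
  assumes "\<And>n. a n \<ge> 0" "\<And>n. b n \<ge> 0"
  shows "Eterm a b p u n \<ge> 0"
  using assms by (simp add: Eterm_def)

lemma normE_powr:
  assumes "\<And>n. a n \<ge> 0" "\<And>n. b n \<ge> 0" "p > 0"
  shows "normE a b p u powr p = (\<Sum>\<^sub>\<infinity>n. Eterm a b p u n)"
proof -
  have "(\<Sum>\<^sub>\<infinity>n. Eterm a b p u n) \<ge> 0"
    by (intro infsum_nonneg Eterm_nonneg assms)
  then show ?thesis
    using assms(3) by (simp add: normE_def powr_powr)
qed

lemma Eterm_scale:
  assumes "t \<ge> 0"
  shows "Eterm a b p (\<lambda>n. t * u n) n = t powr p * Eterm a b p u n"
proof -
  have "fdiff (\<lambda>n. t * u n) n = t * fdiff u n"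
    by (simp add: fdiff_def right_diff_distrib)
  then show ?thesis
    using assms by (simp add: Eterm_def abs_mult powr_mult algebra_simps)
qed

lemma normE_scale_powr:
  assumes "\<And>n. a n \<ge> 0" "\<And>n. b n \<ge> 0" "p > 0" "t \<ge> 0"
  shows "normE a b p (\<lambda>n. t * u n) powr p = t powr p * normE a b p u powr p"
  using assms by (simp add: normE_powr Eterm_scale infsum_cmult_right')

lemma summable_on_weighted_powr_if_inE:
  assumes "\<And>n. a n \<ge> 0" "b0 > 0" "\<And>n. b n \<ge> b0" "\<And>n. c n \<ge> 0" "\<And>n. c n \<le> c0"
    and "0 < p" "p \<le> q" "inE a b p u"
  shows "(\<lambda>n. c n * \<bar>u n\<bar> powr q) summable_on UNIV"
proof -
  have b_nonneg: "b n \<ge> 0" for n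
    using assms(2) assms(3)[of n] by simp
  have c0_nonneg: "c0 \<ge> 0"
    using assms(4)[of 0] assms(5)[of 0] by simp
  have Esum: "Eterm a b p u summable_on UNIV"
    using assms(8) by (simp add: inE_def)
  define S where "S = (\<Sum>\<^sub>\<infinity>n. Eterm a b p u n)"
  have b0_le_Eterm: "b0 * \<bar>u n\<bar> powr p \<le> Eterm a b p u n" for n
  proof -
    have "b0 * \<bar>u n\<bar> powr p \<le> b n * \<bar>u n\<bar> powr p"
      using assms(3) by (intro mult_right_mono) auto
    also have "\<dots> \<le> Eterm a b p u n"
      using assms(1)[of n] by (simp add: Eterm_def)
    finally show ?thesis .
  qed
  have sup_bound: "\<bar>u n\<bar> powr p \<le> S / b0" for n
  proof -
    have "b0 * \<bar>u n\<bar> powr p \<le> S"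
      unfolding S_def using b0_le_Eterm
      by (rule order_trans) (intro le_infsum_of_nonneg Esum Eterm_nonneg assms(1) b_nonneg)
    then show ?thesis
      using assms(2) by (simp add: field_simps)
  qed
  define K where "K = (S / b0) powr ((q - p) / p)"
  have q_le_p: "\<bar>u n\<bar> powr q \<le> K * \<bar>u n\<bar> powr p" for n
  proof -
    have "\<bar>u n\<bar> powr q = (\<bar>u n\<bar> powr p) powr ((q - p) / p) * \<bar>u n\<bar> powr p"
      using assms(6) by (simp add: powr_powr flip: powr_add)
    also have "\<dots> \<le> K * \<bar>u n\<bar> powr p"
      unfolding K_def using assms(6,7) sup_bound
      by (intro mult_right_mono powr_mono2) auto
    finally show ?thesis .
  qed
  show ?thesis
  proof (rule summable_on_comparison_test)
    show "(\<lambda>n. (c0 * K / b0) * Eterm a b p u n) summable_on UNIV"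
      using Esum by (rule summable_on_cmult_right)
  next
    fix n
    have "c n * \<bar>u n\<bar> powr q \<le> c0 * (K * \<bar>u n\<bar> powr p)"
      using assms(4,5) c0_nonneg q_le_p by (intro mult_mono) (auto simp: K_def)
    also have "\<dots> = (c0 * K / b0) * (b0 * \<bar>u n\<bar> powr p)"
      using assms(2) by simp
    also have "\<dots> \<le> (c0 * K / b0) * Eterm a b p u n"
      using assms(2) c0_nonneg b0_le_Eterm by (intro mult_left_mono) (auto simp: K_def)
    finally show "c n * \<bar>u n\<bar> powr q \<le> (c0 * K / b0) * Eterm a b p u n" .
    show "0 \<le> c n * \<bar>u n\<bar> powr q"
      using assms(4)[of n] by simp
  qed
qed

lemma logterm_scale:
  assumes "t \<ge> 0"
  shows "logterm c q r (\<lambda>n. t * u n) n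
    = t powr q * logterm c q r u n + r * (t powr q * ln t) * (c n * \<bar>u n\<bar> powr q)"
proof (cases "t = 0 \<or> u n = 0")
  case False
  then have "t > 0" "\<bar>u n\<bar> > 0"
    using assms by auto
  then show ?thesis
    by (simp add: logterm_def abs_mult powr_mult ln_mult ln_powr algebra_simps)
qed (auto simp: logterm_def)

lemma dI_self:
  assumes "\<And>n. a n \<ge> 0" "\<And>n. b n \<ge> 0" "p > 0"
  shows "dI a b c p q r u u = normE a b p u powr p - (\<Sum>\<^sub>\<infinity>n. logterm c q r u n)"
  using assms
  by (simp add: dI_def normE_powr Eterm_def logterm_def mult.assoc
      abs_powr_minus_two_mult_self[unfolded mult.assoc])

lemma Ifun_scale:
  assumes "\<And>n. a n \<ge> 0" "\<And>n. b n \<ge> 0" "p > 0" "t \<ge> 0"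
    and Lsum: "logterm c q r u summable_on UNIV"
    and Asum: "(\<lambda>n. c n * \<bar>u n\<bar> powr q) summable_on UNIV"
  defines "A \<equiv> \<Sum>\<^sub>\<infinity>n. c n * \<bar>u n\<bar> powr q"
    and "L \<equiv> \<Sum>\<^sub>\<infinity>n. logterm c q r u n"
  shows "Ifun a b c p q r (\<lambda>n. t * u n)
    = t powr p / p * normE a b p u powr p + r / q\<^sup>2 * (t powr q * A)
      - (t powr q * L + r * (t powr q * ln t) * A) / q"
proof -
  have "(\<Sum>\<^sub>\<infinity>n. c n * \<bar>t * u n\<bar> powr q) = (\<Sum>\<^sub>\<infinity>n. t powr q * (c n * \<bar>u n\<bar> powr q))"
    using assms(4) by (simp add: abs_mult powr_mult mult.left_commute)
  then have A_scale: "(\<Sum>\<^sub>\<infinity>n. c n * \<bar>t * u n\<bar> powr q) = t powr q * A"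
    by (simp add: A_def infsum_cmult_right')
  have "(\<Sum>\<^sub>\<infinity>n. logterm c q r (\<lambda>n. t * u n) n)
      = (\<Sum>\<^sub>\<infinity>n. t powr q * logterm c q r u n + r * (t powr q * ln t) * (c n * \<bar>u n\<bar> powr q))"
    using assms(4) by (simp add: logterm_scale)
  also have "\<dots> = t powr q * L + r * (t powr q * ln t) * A"
    using Lsum Asum
    by (simp add: infsum_add summable_on_cmult_right infsum_cmult_right' A_def L_def)
  finally show ?thesis
    using assms(1-4) by (simp add: Ifun_def normE_scale_powr A_scale)
qed

lemma Ifun_minus_ray_bound_eq:
  assumes "\<And>n. a n \<ge> 0" "\<And>n. b n \<ge> 0" "p > 0" "q > 0" "t \<ge> 0"
    and "logterm c q r u summable_on UNIV"
    and "(\<lambda>n. c n * \<bar>u n\<bar> powr q) summable_on UNIV"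
  shows "Ifun a b c p q r u
      - (Ifun a b c p q r (\<lambda>n. t * u n) + (1 - t powr q) / q * dI a b c p q r u u
         + ((1 - t powr p) / p - (1 - t powr q) / q) * normE a b p u powr p)
    = r / q\<^sup>2 * (\<Sum>\<^sub>\<infinity>n. c n * \<bar>u n\<bar> powr q) * (1 - t powr q + q * (t powr q * ln t))"
  using assms
  by (simp add: Ifun_scale dI_self, simp add: Ifun_def field_simps power2_eq_square)

theorem corollary2p3:
  fixes p q r t :: real and a b c :: "int \<Rightarrow> real"
  assumes "1 < p" "p < q" "p / 2 \<in> \<nat>" "r \<ge> 1"
    and "\<And>n. a n > 0" "\<And>n. b n > 0" "\<And>n. c n > 0"
    and C1: "\<exists>b0>0. (\<forall>n. b n \<ge> b0) \<and> filterlim (\<lambda>n. b n) at_top (sup at_top at_bot)"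
    and C2: "\<exists>c0>0. (\<forall>n. c n \<le> c0) \<and> c summable_on UNIV"
    and u: "inD a b c p q r u" and t: "t \<ge> 0"
  shows "Ifun a b c p q r u \<ge> Ifun a b c p q r (\<lambda>n. t * u n)
           + (1 - t powr q) / q * dI a b c p q r u u
           + ((1 - t powr p) / p - (1 - t powr q) / q) * normE a b p u powr p"
proof -
  obtain b0 where b0: "b0 > 0" "\<And>n. b n \<ge> b0" using C1 by auto
  obtain c0 where c0: "\<And>n. c n \<le> c0" using C2 by auto
  have a_nonneg: "\<And>n. a n \<ge> 0" and b_nonneg: "\<And>n. b n \<ge> 0" and c_nonneg: "\<And>n. c n \<ge> 0"
    using assms(5-7) by (auto intro: less_imp_le)
  have Asum: "(\<lambda>n. c n * \<bar>u n\<bar> powr q) summable_on UNIV"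
    by (rule summable_on_weighted_powr_if_inE[where a = a and b = b and c = c and p = p and q = q,
          OF a_nonneg b0 c_nonneg c0])
      (use u assms(1,2) in \<open>auto simp: inD_def\<close>)
  have "0 \<le> r / q\<^sup>2 * (\<Sum>\<^sub>\<infinity>n. c n * \<bar>u n\<bar> powr q) * (1 - t powr q + q * (t powr q * ln t))"
    using assms(1,2,4) c_nonneg t
    by (intro mult_nonneg_nonneg one_minus_powr_plus_ln_nonneg infsum_nonneg) auto
  then show ?thesis
    using Ifun_minus_ray_bound_eq[of a b p q t c r u] a_nonneg b_nonneg t Asum u assms(1,2)
    by (simp add: inD_def)
qed

end
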